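(* For any positive integer $k$, there exist nonisomorphic graphs $G'$ and $G''$ that are cospectral with respect to the adjacency matrix and satisfy $Z(G')>Z(G'')+k$.
   Context: The zero forcing number $Z(G)$ is the minimum size of a set $S\subseteq V(G)$ such that, if the vertices of $S$ are colored blue and all others white, repeated application of the rule "a blue vertex with exactly one white neighbor forces that neighbor to become blue" eventually makes every vertex blue. *)

theory Defs
  imports "Jordan_Normal_Form.Char_Poly"
begin

text \<open>A finite simple graph is represented by a number of vertices n
  (vertex set {0..<n}) and an adjacency relation E, which is symmetric
  and irreflexive on the vertex set.\<close>

type_synonym graph = "nat \<times> (nat \<Rightarrow> nat \<Rightarrow> bool)"

definition verts :: "graph \<Rightarrow> nat set" where
  "verts G = {0..<fst G}"

definition adj :: "graph \<Rightarrow> nat \<Rightarrow> nat \<Rightarrow> bool" where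
  "adj G u v \<longleftrightarrow> u \<in> verts G \<and> v \<in> verts G \<and> snd G u v"

definition simple_graph :: "graph \<Rightarrow> bool" where
  "simple_graph G \<longleftrightarrow>
     (\<forall>u\<in>verts G. \<forall>v\<in>verts G. snd G u v \<longleftrightarrow> snd G v u) \<and>
     (\<forall>u\<in>verts G. \<not> snd G u u)"

definition adjacency_matrix :: "graph \<Rightarrow> int mat" where
  "adjacency_matrix G = mat (fst G) (fst G) (\<lambda>(i, j). if adj G i j then 1 else 0)"

text \<open>Cospectral with respect to the adjacency matrix: same eigenvalues with
  multiplicities, i.e. equal characteristic polynomials.\<close>
definition cospectral :: "graph \<Rightarrow> graph \<Rightarrow> bool" where
  "cospectral G H \<longleftrightarrow> char_poly (adjacency_matrix G) = char_poly (adjacency_matrix H)"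

definition graph_iso :: "graph \<Rightarrow> graph \<Rightarrow> bool" where
  "graph_iso G H \<longleftrightarrow> (\<exists>f. bij_betw f (verts G) (verts H) \<and>
      (\<forall>u\<in>verts G. \<forall>v\<in>verts G. adj G u v \<longleftrightarrow> adj H (f u) (f v)))"

text \<open>Vertices that eventually become blue starting from the blue set S under
  the zero forcing color change rule: a blue vertex u all of whose neighbours
  except w are blue (so w is its unique possibly-white neighbour) forces w.\<close>
inductive_set blue_closure :: "graph \<Rightarrow> nat set \<Rightarrow> nat set" for G S where
  init: "v \<in> S \<Longrightarrow> v \<in> blue_closure G S"
| force: "u \<in> blue_closure G S \<Longrightarrow> adj G u w \<Longrightarrow>
          (\<forall>x. adj G u x \<and> x \<noteq> w \<longrightarrow> x \<in> blue_closure G S) \<Longrightarrow>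
          w \<in> blue_closure G S"

definition zero_forcing_set :: "graph \<Rightarrow> nat set \<Rightarrow> bool" where
  "zero_forcing_set G S \<longleftrightarrow> S \<subseteq> verts G \<and> verts G \<subseteq> blue_closure G S"

definition zero_forcing_number :: "graph \<Rightarrow> nat" where
  "zero_forcing_number G = Min (card ` {S. zero_forcing_set G S})"

end

theory Submission
  imports Defs
begin

text \<open>The graphs \<open>K\<^sub>1\<^sub>,\<^sub>3 \<union> K\<^sub>2\<close> and \<open>P\<^sub>5 \<union> K\<^sub>1\<close> are cospectral (both have
  spectrum \<open>\<plusminus>\<surd>3, \<plusminus>1, 0, 0\<close>), yet their zero forcing numbers are 3 and 2: two of the
  three pairwise twin leaves of the claw and one end of the edge must be initially blue,
  whereas one end of the path together with the isolated vertex suffices.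
  Now take \<open>m = k + 1\<close> disjoint copies of each.  The characteristic polynomial of a
  disjoint union is the product of those of its parts, so the copies stay cospectral;
  only the second graph has isolated vertices, so they are not isomorphic; and forcing
  never crosses between copies, so the zero forcing number is additive, giving
  \<open>3m > 2m + k\<close>.\<close>

section \<open>Disjoint copies of a graph\<close>

text \<open>Vertex \<open>fst G * c + a\<close> of \<open>copies m G\<close> is vertex \<open>a\<close> of the \<open>c\<close>-th copy of \<open>G\<close>.\<close>
definition copies :: "nat \<Rightarrow> graph \<Rightarrow> graph" where
  "copies m G = (m * fst G,
     \<lambda>u v. u div fst G = v div fst G \<and> snd G (u mod fst G) (v mod fst G))"

lemma fst_copies [simp]: "fst (copies m G) = m * fst G"
  by (simp add: copies_def)

lemma mod_less_of_less_mult: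
  fixes x n :: nat
  assumes "x < m * n"
  shows "x mod n < n"
  using assms by (cases "n = 0") auto

lemma copy_vertex_in_verts:
  assumes "c < m" "a \<in> verts G"
  shows "fst G * c + a \<in> verts (copies m G)"
proof -
  have "fst G * c + a < Suc c * fst G" using assms(2) by (simp add: verts_def)
  also have "\<dots> \<le> m * fst G" using assms(1) by (intro mult_le_mono1) simp
  finally show ?thesis by (simp add: verts_def)
qed

lemma verts_copiesE:
  assumes "x \<in> verts (copies m G)"
  obtains c a where "c < m" "a \<in> verts G" "x = fst G * c + a"
proof
  show "x div fst G < m" "x mod fst G \<in> verts G"
    using assms by (auto simp: verts_def less_mult_imp_div_less mod_less_of_less_mult)
qed simp

lemma adj_copies:
  "adj (copies m G) u v \<longleftrightarrow>
     u < m * fst G \<and> v < m * fst G \<and> u div fst G = v div fst G \<and>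
     adj G (u mod fst G) (v mod fst G)"
  by (cases "fst G = 0") (auto simp: adj_def verts_def copies_def)

lemma adj_copies_same_copy:
  assumes "c < m" "a \<in> verts G" "b \<in> verts G"
  shows "adj (copies m G) (fst G * c + a) (fst G * c + b) \<longleftrightarrow> adj G a b"
  using assms copy_vertex_in_verts[OF assms(1)] by (auto simp: adj_copies verts_def)

lemma adj_copies_Suc:
  "adj (copies (Suc m) G) i j \<longleftrightarrow>
     (if i < fst G \<and> j < fst G then adj G i j
      else fst G \<le> i \<and> fst G \<le> j \<and> adj (copies m G) (i - fst G) (j - fst G))"
proof (cases "fst G = 0")
  case False
  then have shift: "x div fst G = Suc ((x - fst G) div fst G) \<and> x mod fst G = (x - fst G) mod fst G"
    if "fst G \<le> x" for x
    using that by (simp add: le_div_geq le_mod_geq)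
  show ?thesis
    by (cases "i < fst G"; cases "j < fst G") (auto simp: adj_copies shift)
qed (simp add: adj_copies)

lemma simple_graph_copies:
  assumes "simple_graph G"
  shows "simple_graph (copies m G)"
  using assms mod_less_of_less_mult[of _ m "fst G"]
  unfolding simple_graph_def copies_def verts_def by auto

lemma graph_iso_no_isolated:
  assumes "graph_iso G H" "\<forall>v\<in>verts G. \<exists>u. adj G v u"
  shows "\<forall>w\<in>verts H. \<exists>u. adj H w u"
proof
  fix w assume "w \<in> verts H"
  obtain f where f: "bij_betw f (verts G) (verts H)"
    "\<forall>u\<in>verts G. \<forall>v\<in>verts G. adj G u v \<longleftrightarrow> adj H (f u) (f v)"
    using assms(1) unfolding graph_iso_def by blast
  obtain v where "v \<in> verts G" "w = f v"
    using f(1) \<open>w \<in> verts H\<close> by (auto simp: bij_betw_def)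
  moreover obtain u where "adj G v u"
    using assms(2) \<open>v \<in> verts G\<close> by blast
  ultimately show "\<exists>u. adj H w u"
    using f(2) by (metis adj_def)
qed

lemma copies_no_isolated:
  assumes "\<forall>a\<in>verts G. \<exists>b. adj G a b"
  shows "\<forall>v\<in>verts (copies m G). \<exists>u. adj (copies m G) v u"
proof
  fix v assume "v \<in> verts (copies m G)"
  then obtain c a where "c < m" "a \<in> verts G" "v = fst G * c + a"
    by (rule verts_copiesE)
  moreover obtain b where "adj G a b"
    using assms \<open>a \<in> verts G\<close> by blast
  moreover have "b \<in> verts G"
    using \<open>adj G a b\<close> by (simp add: adj_def)
  ultimately show "\<exists>u. adj (copies m G) v u"
    using adj_copies_same_copy by blast
qed

section \<open>Characteristic polynomials\<close>

lemma char_poly_four_block_diag: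
  fixes A D :: "'a :: idom mat"
  assumes A: "A \<in> carrier_mat n n" and D: "D \<in> carrier_mat m m"
  shows "char_poly (four_block_mat A (0\<^sub>m n m) (0\<^sub>m m n) D) = char_poly A * char_poly D"
proof -
  have "char_poly_matrix (four_block_mat A (0\<^sub>m n m) (0\<^sub>m m n) D) =
        four_block_mat (char_poly_matrix A) (0\<^sub>m n m) (0\<^sub>m m n) (char_poly_matrix D)"
    using A D by (intro eq_matI) (auto simp: char_poly_matrix_def)
  then show ?thesis
    unfolding char_poly_def
    by (simp add: det_four_block_mat_upper_right_zero[of _ n _ m] A D)
qed

lemma adjacency_matrix_copies_Suc:
  "adjacency_matrix (copies (Suc m) G) =
     four_block_mat (adjacency_matrix G) (0\<^sub>m (fst G) (m * fst G))
       (0\<^sub>m (m * fst G) (fst G)) (adjacency_matrix (copies m G))"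
  by (rule eq_matI) (auto simp: adjacency_matrix_def adj_copies_Suc)

lemma char_poly_adjacency_matrix_copies:
  "char_poly (adjacency_matrix (copies m G)) = char_poly (adjacency_matrix G) ^ m"
proof (induction m)
  case 0
  then show ?case
    by (simp add: char_poly_def char_poly_matrix_def adjacency_matrix_def)
next
  case (Suc m)
  then show ?case
    unfolding adjacency_matrix_copies_Suc
    by (subst char_poly_four_block_diag) (auto simp: adjacency_matrix_def)
qed

lemma cospectral_copies:
  assumes "cospectral G H"
  shows "cospectral (copies m G) (copies m H)"
  using assms by (simp add: cospectral_def char_poly_adjacency_matrix_copies)

lemma cospectral_if_similar_adjacency_matrices:
  assumes "similar_mat (map_mat (of_int :: int \<Rightarrow> 'a :: {field, ring_char_0}) (adjacency_matrix G))
             (map_mat of_int (adjacency_matrix H))"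
  shows "cospectral G H"
proof -
  have carrier: "adjacency_matrix G' \<in> carrier_mat (fst G') (fst G')" for G'
    by (simp add: adjacency_matrix_def)
  have "map_poly (of_int :: int \<Rightarrow> 'a) (char_poly (adjacency_matrix G)) =
        map_poly of_int (char_poly (adjacency_matrix H))"
    using char_poly_similar[OF assms]
    by (simp add: of_int_hom.char_poly_hom[OF carrier])
  then show ?thesis unfolding cospectral_def by simp
qed

section \<open>Zero forcing\<close>

lemma finite_zero_forcing_sets: "finite {S. zero_forcing_set G S}"
proof (rule finite_subset)
  show "{S. zero_forcing_set G S} \<subseteq> Pow (verts G)"
    by (auto simp: zero_forcing_set_def)
qed (simp add: verts_def)

lemma finite_zero_forcing_set:
  assumes "zero_forcing_set G S"
  shows "finite S"
  using assms by (auto simp: zero_forcing_set_def verts_def intro: finite_subset)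

lemma zero_forcing_number_le:
  assumes "zero_forcing_set G S"
  shows "zero_forcing_number G \<le> card S"
  using assms finite_zero_forcing_sets unfolding zero_forcing_number_def by simp

lemma zero_forcing_set_verts: "zero_forcing_set G (verts G)"
  by (auto simp: zero_forcing_set_def intro: blue_closure.init)

lemma obtain_minimum_zero_forcing_set:
  obtains S where "zero_forcing_set G S" "card S = zero_forcing_number G"
proof -
  have "zero_forcing_number G \<in> card ` {S. zero_forcing_set G S}"
    unfolding zero_forcing_number_def
    using finite_zero_forcing_sets[of G] zero_forcing_set_verts[of G] by (intro Min_in) auto
  then show ?thesis using that by auto
qed

lemma twin_not_in_blue_closure:
  assumes "a \<noteq> b" "a \<notin> S" "b \<notin> S"
    and twins: "\<And>x. x \<noteq> a \<Longrightarrow> x \<noteq> b \<Longrightarrow> adj G x a \<longleftrightarrow> adj G x b"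
  shows "a \<notin> blue_closure G S"
proof -
  have "x \<noteq> a \<and> x \<noteq> b" if "x \<in> blue_closure G S" for x
    using that
  proof (induction rule: blue_closure.induct)
    case (force u w)
    \<comment> \<open>a vertex adjacent to one twin is adjacent to both, so it never forces either\<close>
    then show ?case
      using \<open>a \<noteq> b\<close> twins[of u] by (metis adj_def)
  qed (use assms in auto)
  then show ?thesis by blast
qed

lemma zero_forcing_set_contains_twin:
  assumes "zero_forcing_set G S" "a \<in> verts G" "a \<noteq> b"
    and "\<And>x. x \<noteq> a \<Longrightarrow> x \<noteq> b \<Longrightarrow> adj G x a \<longleftrightarrow> adj G x b"
  shows "a \<in> S \<or> b \<in> S"
  using twin_not_in_blue_closure[of a b S G] assms unfolding zero_forcing_set_def by blast

definition copies_set :: "nat \<Rightarrow> graph \<Rightarrow> nat set \<Rightarrow> nat set" where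
  "copies_set m G S = (\<lambda>(c, s). fst G * c + s) ` ({..<m} \<times> S)"

lemma card_copies_set_le:
  assumes "finite S"
  shows "card (copies_set m G S) \<le> m * card S"
  using assms card_image_le[of "{..<m} \<times> S"] by (simp add: copies_set_def card_cartesian_product)

lemma blue_closure_copies_set:
  assumes "r \<in> blue_closure G S" "c < m"
  shows "fst G * c + r \<in> blue_closure (copies m G) (copies_set m G S)"
  using assms(1)
proof (induction rule: blue_closure.induct)
  case (init v)
  then show ?case using assms(2) by (auto simp: copies_set_def intro: blue_closure.init)
next
  case (force u w)
  let ?n = "fst G"
  show ?case
  proof (rule blue_closure.force[of "?n * c + u"])
    show "?n * c + u \<in> blue_closure (copies m G) (copies_set m G S)"
      by (fact force.IH)
    have "u \<in> verts G" "w \<in> verts G"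
      using force.hyps(2) by (simp_all add: adj_def)
    then show "adj (copies m G) (?n * c + u) (?n * c + w)"
      using force.hyps(2) assms(2) by (simp add: adj_copies_same_copy)
    show "\<forall>x. adj (copies m G) (?n * c + u) x \<and> x \<noteq> ?n * c + w \<longrightarrow>
        x \<in> blue_closure (copies m G) (copies_set m G S)"
    proof (intro allI impI)
      fix x assume x: "adj (copies m G) (?n * c + u) x \<and> x \<noteq> ?n * c + w"
      have "u < ?n" using \<open>u \<in> verts G\<close> by (simp add: verts_def)
      then have "x div ?n = c" "adj G u (x mod ?n)"
        using x by (auto simp: adj_copies)
      moreover have "x = ?n * c + x mod ?n"
        using \<open>x div ?n = c\<close> mult_div_mod_eq[of ?n x] by simp
      ultimately show "x \<in> blue_closure (copies m G) (copies_set m G S)"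
        using force.IH(2) x by metis
    qed
  qed
qed

lemma zero_forcing_set_copies_set:
  assumes "zero_forcing_set G S"
  shows "zero_forcing_set (copies m G) (copies_set m G S)"
  unfolding zero_forcing_set_def
proof
  show "copies_set m G S \<subseteq> verts (copies m G)"
  proof
    fix x assume "x \<in> copies_set m G S"
    then obtain c a where "c < m" "a \<in> S" "x = fst G * c + a"
      by (auto simp: copies_set_def)
    moreover have "a \<in> verts G"
      using assms \<open>a \<in> S\<close> by (auto simp: zero_forcing_set_def)
    ultimately show "x \<in> verts (copies m G)"
      using copy_vertex_in_verts by simp
  qed
  show "verts (copies m G) \<subseteq> blue_closure (copies m G) (copies_set m G S)"
  proof
    fix x assume "x \<in> verts (copies m G)"
    then obtain c a where "c < m" "a \<in> verts G" "x = fst G * c + a"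
      by (rule verts_copiesE)
    moreover have "a \<in> blue_closure G S"
      using assms \<open>a \<in> verts G\<close> by (auto simp: zero_forcing_set_def)
    ultimately show "x \<in> blue_closure (copies m G) (copies_set m G S)"
      using blue_closure_copies_set by simp
  qed
qed

lemma zero_forcing_number_copies_le:
  "zero_forcing_number (copies m G) \<le> m * zero_forcing_number G"
proof -
  obtain S where S: "zero_forcing_set G S" "card S = zero_forcing_number G"
    by (rule obtain_minimum_zero_forcing_set)
  have "finite S"
    using S(1) by (rule finite_zero_forcing_set)
  have "zero_forcing_number (copies m G) \<le> card (copies_set m G S)"
    using S(1) by (intro zero_forcing_number_le zero_forcing_set_copies_set)
  also have "\<dots> \<le> m * zero_forcing_number G"
    using card_copies_set_le[OF \<open>finite S\<close>] S(2) by simp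
  finally show ?thesis .
qed

lemma blue_closure_copies_restrict:
  assumes "x \<in> blue_closure (copies m G) S" "S \<subseteq> verts (copies m G)"
  shows "x mod fst G \<in> blue_closure G {a \<in> verts G. fst G * (x div fst G) + a \<in> S}"
  using assms(1)
proof (induction rule: blue_closure.induct)
  case (init v)
  then obtain c a where "c < m" "a \<in> verts G" "v = fst G * c + a"
    using assms(2) verts_copiesE by blast
  then show ?case
    using init by (auto simp: verts_def intro: blue_closure.init)
next
  case (force u w)
  let ?n = "fst G" and ?c = "u div fst G"
  let ?S = "{a \<in> verts G. ?n * ?c + a \<in> S}"
  have u: "u = ?n * ?c + u mod ?n" "?c < m" "u mod ?n \<in> verts G"
    using force.hyps(2) mult_div_mod_eq[of ?n u]
    by (auto simp: adj_copies verts_def less_mult_imp_div_less mod_less_of_less_mult)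
  have "w div ?n = ?c" "adj G (u mod ?n) (w mod ?n)"
    using force.hyps(2) by (auto simp: adj_copies)
  moreover have "w mod ?n \<in> blue_closure G ?S"
  proof (rule blue_closure.force[of "u mod ?n"])
    show "u mod ?n \<in> blue_closure G ?S" by (fact force.IH)
    show "adj G (u mod ?n) (w mod ?n)" by fact
    show "\<forall>y. adj G (u mod ?n) y \<and> y \<noteq> w mod ?n \<longrightarrow> y \<in> blue_closure G ?S"
    proof (intro allI impI)
      fix y assume y: "adj G (u mod ?n) y \<and> y \<noteq> w mod ?n"
      then have "y \<in> verts G" by (simp add: adj_def)
      then have "adj (copies m G) u (?n * ?c + y)" "?n * ?c + y \<noteq> w"
        using y u adj_copies_same_copy[OF u(2,3)] by (auto simp: verts_def)
      then have "(?n * ?c + y) mod ?n \<in> blue_closure G {a \<in> verts G. ?n * ((?n * ?c + y) div ?n) + a \<in> S}"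
        using force.IH(2) by blast
      then show "y \<in> blue_closure G ?S" using \<open>y \<in> verts G\<close> by (simp add: verts_def)
    qed
  qed
  ultimately show ?case by simp
qed

lemma zero_forcing_set_restrict_copy:
  assumes "zero_forcing_set (copies m G) S" "c < m"
  shows "zero_forcing_set G {a \<in> verts G. fst G * c + a \<in> S}"
  unfolding zero_forcing_set_def
proof (intro conjI subsetI)
  fix a assume "a \<in> verts G"
  then have "fst G * c + a \<in> blue_closure (copies m G) S"
    using assms(1) copy_vertex_in_verts[OF assms(2) \<open>a \<in> verts G\<close>] by (auto simp: zero_forcing_set_def)
  then have "(fst G * c + a) mod fst G \<in>
      blue_closure G {b \<in> verts G. fst G * ((fst G * c + a) div fst G) + b \<in> S}"
    using assms(1) by (intro blue_closure_copies_restrict) (auto simp: zero_forcing_set_def)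
  then show "a \<in> blue_closure G {b \<in> verts G. fst G * c + b \<in> S}"
    using \<open>a \<in> verts G\<close> by (simp add: verts_def)
qed auto

lemma zero_forcing_number_copies_ge:
  "m * zero_forcing_number G \<le> zero_forcing_number (copies m G)"
proof -
  obtain S where S: "zero_forcing_set (copies m G) S"
    "card S = zero_forcing_number (copies m G)"
    by (rule obtain_minimum_zero_forcing_set)
  define T where "T c = {a \<in> verts G. fst G * c + a \<in> S}" for c
  have "m * zero_forcing_number G \<le> (\<Sum>c<m. card (T c))"
    using sum_mono[of "{..<m}" "\<lambda>_. zero_forcing_number G" "\<lambda>c. card (T c)"]
      zero_forcing_number_le[OF zero_forcing_set_restrict_copy[OF S(1)]]
    by (simp add: T_def)
  also have "\<dots> = card (SIGMA c:{..<m}. T c)"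
    by (simp add: T_def verts_def)
  also have "\<dots> \<le> card S"
  proof (rule card_inj_on_le)
    have "c = c' \<and> a = a'"
      if "a < fst G" "a' < fst G" "fst G * c + a = fst G * c' + a'" for c a c' a'
    proof -
      have "(fst G * c + a) div fst G = c" "(fst G * c' + a') div fst G = c'"
        using that(1,2) by simp_all
      then show ?thesis using that by auto
    qed
    then show "inj_on (\<lambda>(c, a). fst G * c + a) (SIGMA c:{..<m}. T c)"
      by (auto simp: inj_on_def T_def verts_def)
    show "(\<lambda>(c, a). fst G * c + a) ` (SIGMA c:{..<m}. T c) \<subseteq> S"
      by (auto simp: T_def)
    show "finite S"
      using S(1) by (rule finite_zero_forcing_set)
  qed
  finally show ?thesis using S(2) by simp
qed

lemma zero_forcing_number_copies:
  "zero_forcing_number (copies m G) = m * zero_forcing_number G"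
  using zero_forcing_number_copies_le zero_forcing_number_copies_ge by (rule antisym)

section \<open>The two base graphs\<close>

lemma less_6_cases: "(i :: nat) < 6 \<longleftrightarrow> i = 0 \<or> i = 1 \<or> i = 2 \<or> i = 3 \<or> i = 4 \<or> i = 5"
  by auto

lemma sum_6: "(\<Sum>k \<in> {0..<6 :: nat}. f k) = f 0 + f 1 + f 2 + f 3 + f 4 + (f 5 :: 'a :: comm_monoid_add)"
  by (simp add: numeral_eq_Suc atLeast0LessThan lessThan_Suc add_ac)

definition claw_plus_edge :: graph where
  "claw_plus_edge = (6, \<lambda>u v. {u, v} \<in> {{0, 1}, {0, 2}, {0, 3}, {4, 5}})"

definition path_plus_vertex :: graph where
  "path_plus_vertex = (6, \<lambda>u v. {u, v} \<in> {{0, 1}, {1, 2}, {2, 3}, {3, 4}})"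

lemma fst_claw_plus_edge [simp]: "fst claw_plus_edge = 6"
  by (simp add: claw_plus_edge_def)

lemma fst_path_plus_vertex [simp]: "fst path_plus_vertex = 6"
  by (simp add: path_plus_vertex_def)

lemma adj_claw_plus_edge:
  "adj claw_plus_edge u v \<longleftrightarrow> {u, v} \<in> {{0, 1}, {0, 2}, {0, 3}, {4, 5}}"
  by (auto simp: adj_def verts_def claw_plus_edge_def doubleton_eq_iff)

lemma adj_path_plus_vertex:
  "adj path_plus_vertex u v \<longleftrightarrow> {u, v} \<in> {{0, 1}, {1, 2}, {2, 3}, {3, 4}}"
  by (auto simp: adj_def verts_def path_plus_vertex_def doubleton_eq_iff)

lemma simple_graph_claw_plus_edge: "simple_graph claw_plus_edge"
  by (auto simp: simple_graph_def claw_plus_edge_def insert_commute)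

lemma simple_graph_path_plus_vertex: "simple_graph path_plus_vertex"
  by (auto simp: simple_graph_def path_plus_vertex_def insert_commute)

lemma claw_plus_edge_no_isolated: "\<forall>a\<in>verts claw_plus_edge. \<exists>b. adj claw_plus_edge a b"
  by (auto simp: verts_def less_6_cases adj_claw_plus_edge doubleton_eq_iff)

lemma isolated_vertex_copies_path_plus_vertex:
  "\<not> adj (copies m path_plus_vertex) 5 u"
  by (auto simp: adj_copies adj_path_plus_vertex doubleton_eq_iff)

lemma adjacency_matrix_claw_plus_edge:
  "adjacency_matrix claw_plus_edge = mat_of_rows_list 6
     [[0, 1, 1, 1, 0, 0],
      [1, 0, 0, 0, 0, 0],
      [1, 0, 0, 0, 0, 0],
      [1, 0, 0, 0, 0, 0],
      [0, 0, 0, 0, 0, 1],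
      [0, 0, 0, 0, 1, 0]]"
  unfolding adjacency_matrix_def mat_of_rows_list_def
  by (intro eq_matI) (auto simp: adj_claw_plus_edge less_Suc_eq less_6_cases doubleton_eq_iff)

lemma adjacency_matrix_path_plus_vertex:
  "adjacency_matrix path_plus_vertex = mat_of_rows_list 6
     [[0, 1, 0, 0, 0, 0],
      [1, 0, 1, 0, 0, 0],
      [0, 1, 0, 1, 0, 0],
      [0, 0, 1, 0, 1, 0],
      [0, 0, 0, 1, 0, 0],
      [0, 0, 0, 0, 0, 0]]"
  unfolding adjacency_matrix_def mat_of_rows_list_def
  by (intro eq_matI) (auto simp: adj_path_plus_vertex less_Suc_eq less_6_cases doubleton_eq_iff)

text \<open>Both adjacency matrices are diagonalizable with the same spectrum, so they are
  similar over \<open>\<rat>(\<surd>3)\<close> and hence over \<open>\<rat>\<close>; this matrix \<open>P\<close> satisfies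
  \<open>P A = B P\<close> for the two adjacency matrices \<open>A\<close> and \<open>B\<close>.\<close>
definition claw_path_intertwiner :: "rat mat" where
  "claw_path_intertwiner = mat_of_rows_list 6
     [[ 0, -1,  0,  0,  1,  0],
      [-1,  0,  0,  0,  0,  1],
      [ 0,  0, -1, -1,  0,  0],
      [-1,  0,  0,  0,  0, -1],
      [ 0, -1,  0,  0, -1,  0],
      [ 0,  1, -1,  0,  0,  0]]"

definition claw_path_intertwiner_inv :: "rat mat" where
  "claw_path_intertwiner_inv = mat_of_rows_list 6
     [[   0, -1/2,  0, -1/2,    0,  0],
      [-1/2,    0,  0,    0, -1/2,  0],
      [-1/2,    0,  0,    0, -1/2, -1],
      [ 1/2,    0, -1,    0,  1/2,  1],
      [ 1/2,    0,  0,    0, -1/2,  0],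
      [   0,  1/2,  0, -1/2,    0,  0]]"

lemma similar_adjacency_matrices_claw_path:
  "similar_mat (map_mat (of_int :: int \<Rightarrow> rat) (adjacency_matrix claw_plus_edge))
     (map_mat of_int (adjacency_matrix path_plus_vertex))"
proof (rule similar_matI)
  let ?P = claw_path_intertwiner and ?Q = claw_path_intertwiner_inv
  let ?A = "map_mat (of_int :: int \<Rightarrow> rat) (adjacency_matrix claw_plus_edge)"
  let ?B = "map_mat (of_int :: int \<Rightarrow> rat) (adjacency_matrix path_plus_vertex)"
  note defs = claw_path_intertwiner_def claw_path_intertwiner_inv_def mat_of_rows_list_def
    adjacency_matrix_claw_plus_edge adjacency_matrix_path_plus_vertex
  have carrier: "?A \<in> carrier_mat 6 6" "?B \<in> carrier_mat 6 6"
    "?P \<in> carrier_mat 6 6" "?Q \<in> carrier_mat 6 6"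
    by (auto simp: defs)
  then show "{?A, ?B, ?Q, ?P} \<subseteq> carrier_mat 6 6" by auto
  show QP: "?Q * ?P = 1\<^sub>m 6"
    by (rule eq_matI) (simp_all add: defs scalar_prod_def sum_6, auto simp: less_Suc_eq less_6_cases)
  show "?P * ?Q = 1\<^sub>m 6"
    by (rule eq_matI) (simp_all add: defs scalar_prod_def sum_6, auto simp: less_Suc_eq less_6_cases)
  have PA: "?P * ?A = ?B * ?P"
    by (rule eq_matI) (simp_all add: defs scalar_prod_def sum_6, auto simp: less_Suc_eq less_6_cases)
  have "?Q * ?B * ?P = ?Q * (?B * ?P)"
    using carrier(4,2,3) by (rule assoc_mult_mat)
  also have "\<dots> = ?Q * ?P * ?A"
    using carrier(4,3,1) by (simp add: PA assoc_mult_mat)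
  also have "\<dots> = ?A"
    using carrier(1) by (simp add: QP)
  finally show "?A = ?Q * ?B * ?P" by simp
qed

lemma zero_forcing_number_claw_plus_edge_ge: "3 \<le> zero_forcing_number claw_plus_edge"
proof -
  obtain S where S: "zero_forcing_set claw_plus_edge S"
    "card S = zero_forcing_number claw_plus_edge"
    by (rule obtain_minimum_zero_forcing_set)
  have "1 \<in> S \<or> 2 \<in> S" "1 \<in> S \<or> 3 \<in> S" "2 \<in> S \<or> 3 \<in> S" "4 \<in> S \<or> 5 \<in> S"
    by (rule zero_forcing_set_contains_twin[OF S(1)];
        auto simp: adj_claw_plus_edge verts_def doubleton_eq_iff)+
  then have "{1, 2, 4} \<subseteq> S \<or> {1, 2, 5} \<subseteq> S \<or> {1, 3, 4} \<subseteq> S \<or>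
        {1, 3, 5} \<subseteq> S \<or> {2, 3, 4} \<subseteq> S \<or> {2, 3, 5} \<subseteq> S"
    by auto
  moreover have "finite S"
    using S(1) by (rule finite_zero_forcing_set)
  ultimately have "3 \<le> card S"
    by (elim disjE) (drule card_mono[OF \<open>finite S\<close>], simp)+
  with S(2) show ?thesis by simp
qed

lemma zero_forcing_set_path_plus_vertex: "zero_forcing_set path_plus_vertex {0, 5}"
proof -
  let ?B = "blue_closure path_plus_vertex {0, 5}"
  have "0 \<in> ?B" "5 \<in> ?B" by (auto intro: blue_closure.init)
  have "1 \<in> ?B"
    using \<open>0 \<in> ?B\<close> by (rule blue_closure.force) (auto simp: adj_path_plus_vertex doubleton_eq_iff)
  have "2 \<in> ?B"
    using \<open>1 \<in> ?B\<close> by (rule blue_closure.force)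
      (use \<open>0 \<in> ?B\<close> in \<open>auto simp: adj_path_plus_vertex doubleton_eq_iff\<close>)
  have "3 \<in> ?B"
    using \<open>2 \<in> ?B\<close> by (rule blue_closure.force)
      (use \<open>1 \<in> ?B\<close> in \<open>auto simp: adj_path_plus_vertex doubleton_eq_iff\<close>)
  have "4 \<in> ?B"
    using \<open>3 \<in> ?B\<close> by (rule blue_closure.force)
      (use \<open>2 \<in> ?B\<close> in \<open>auto simp: adj_path_plus_vertex doubleton_eq_iff\<close>)
  have "verts path_plus_vertex = {0, 1, 2, 3, 4, 5}"
    by (auto simp: verts_def)
  then show ?thesis
    unfolding zero_forcing_set_def
    using \<open>0 \<in> ?B\<close> \<open>1 \<in> ?B\<close> \<open>2 \<in> ?B\<close> \<open>3 \<in> ?B\<close> \<open>4 \<in> ?B\<close> \<open>5 \<in> ?B\<close> by auto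
qed

lemma zero_forcing_number_path_plus_vertex_le: "zero_forcing_number path_plus_vertex \<le> 2"
  using zero_forcing_number_le[OF zero_forcing_set_path_plus_vertex] by simp

theorem corollary5p2:
  fixes k :: nat
  assumes "k > 0"
  shows "\<exists>G1 G2. simple_graph G1 \<and> simple_graph G2 \<and>
           \<not> graph_iso G1 G2 \<and> cospectral G1 G2 \<and>
           zero_forcing_number G1 > zero_forcing_number G2 + k"
proof (intro exI conjI)
  let ?G1 = "copies (Suc k) claw_plus_edge" and ?G2 = "copies (Suc k) path_plus_vertex"
  show "simple_graph ?G1" "simple_graph ?G2"
    by (simp_all add: simple_graph_copies simple_graph_claw_plus_edge simple_graph_path_plus_vertex)
  show "cospectral ?G1 ?G2"
    using cospectral_if_similar_adjacency_matrices[OF similar_adjacency_matrices_claw_path]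
    by (rule cospectral_copies)
  have "5 \<in> verts ?G2"
    by (simp add: verts_def)
  then show "\<not> graph_iso ?G1 ?G2"
    using graph_iso_no_isolated copies_no_isolated[OF claw_plus_edge_no_isolated]
      isolated_vertex_copies_path_plus_vertex by blast
  have "Suc k * 3 \<le> zero_forcing_number ?G1"
    unfolding zero_forcing_number_copies by (rule mult_le_mono2[OF zero_forcing_number_claw_plus_edge_ge])
  moreover have "zero_forcing_number ?G2 \<le> Suc k * 2"
    unfolding zero_forcing_number_copies by (rule mult_le_mono2[OF zero_forcing_number_path_plus_vertex_le])
  ultimately show "zero_forcing_number ?G1 > zero_forcing_number ?G2 + k"
    by simp
qed

end
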